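(* Let $d\ge3$ and let $G_0$ be the Green's function (with pole at $0$) of the free Laplacian on $\mathbb Z^d$. Then for every $x\in\mathbb Z^d$, $$\sum_{y\in\mathbb Z^d:\,|y-x|=1}|G_0(x)-G_0(y)|>0.$$
   Context: The free Laplacian on $\mathbb Z^d$ is $\Delta f(x)=\sum_{y:|y-x|=1}(f(x)-f(y))$ and its Green's function is $G_0(x)=\lim_{\alpha\downarrow0}((\Delta+\alpha)^{-1}1_0)(x)$, which is finite for $d\ge3$. *)

theory Defs
  imports "HOL-Analysis.Analysis"
begin

text \<open>Points of Z^d are vectors int^'n, with d = CARD('n).\<close>

definition nbrs :: "int^'n \<Rightarrow> (int^'n) set" where
  "nbrs x = {y. (\<Sum>i\<in>UNIV. (y$i - x$i)^2) = 1}"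

definition lap :: "(int^'n \<Rightarrow> real) \<Rightarrow> int^'n \<Rightarrow> real" where
  "lap f x = (\<Sum>y\<in>nbrs x. f x - f y)"

definition resolvent0 :: "real \<Rightarrow> int^'n \<Rightarrow> real" where
  "resolvent0 \<alpha> = (THE f. (\<lambda>x. (f x)^2) summable_on UNIV \<and>
       (\<forall>x. lap f x + \<alpha> * f x = (if x = 0 then 1 else 0)))"

definition green0 :: "int^'n \<Rightarrow> real" where
  "green0 x = Lim (at_right 0) (\<lambda>\<alpha>. resolvent0 \<alpha> x)"

end

theory Submission
  imports Defs
begin

text \<open>For \<open>\<alpha> > 0\<close> the resolvent \<open>(lap + \<alpha>)\<^sup>-\<^sup>1 1\<^sub>0\<close> is the Neumann series
  \<open>\<Sum>n. c\<^sup>n / (c + \<alpha>)\<^sup>n\<^sup>+\<^sup>1 p\<^sub>n\<close> in the probabilities \<open>p\<^sub>n\<close> of the simple random walk from 0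
  (\<open>c = 2d\<close>); by the maximum principle it is the unique square summable solution. For
  \<open>d \<ge> 3\<close>, Polya's flow of finite energy on an octant embedded in the lattice bounds the partial
  sums at the origin uniformly in \<open>\<alpha>\<close>, so the series converges at \<open>\<alpha> = 0\<close>: the Green's function
  exists and \<open>lap G\<^sub>0 = 1\<^sub>0\<close>. Now reflect across the hyperplane halfway between \<open>x\<close> and a neighbour
  \<open>y\<close> farther from the origin. By the maximum principle \<open>G\<^sub>0 - G\<^sub>0 \<circ> \<rho>\<close> is nonnegative on the
  half-space containing 0, and a zero there would spread to the origin, where its Laplacian is 1;
  hence
  \<open>G\<^sub>0 x > G\<^sub>0 y\<close>.\<close>

definition lattice_degree :: "'n::finite itself \<Rightarrow> real" where
  "lattice_degree _ = real (card (nbrs (0::int^'n)))"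

definition unit_vec :: "'n::finite \<Rightarrow> int^'n" where
  "unit_vec i = (\<chi> j. if j = i then 1 else 0)"

lemma finite_vec_range: "finite A \<Longrightarrow> finite {v::'a^'n::finite. \<forall>i. v$i \<in> A}"
proof -
  assume A: "finite A"
  have "{v::'a^'n. \<forall>i. v$i \<in> A} \<subseteq> vec_lambda ` (UNIV \<rightarrow>\<^sub>E A)"
  proof
    fix v :: "'a^'n" assume "v \<in> {v. \<forall>i. v$i \<in> A}"
    then have "(\<lambda>i. v$i) \<in> UNIV \<rightarrow>\<^sub>E A" by auto
    then show "v \<in> vec_lambda ` (UNIV \<rightarrow>\<^sub>E A)" by (metis image_eqI vec_lambda_eta)
  qed
  moreover have "finite (vec_lambda ` (UNIV \<rightarrow>\<^sub>E A) :: ('a^'n) set)"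
    using A by (intro finite_imageI finite_PiE) auto
  ultimately show ?thesis by (rule finite_subset)
qed

lemma nbrs_iff_diff: "y \<in> nbrs x \<longleftrightarrow> y - x \<in> nbrs 0"
  by (simp add: nbrs_def)

lemma nbrs_translate: "nbrs x = (\<lambda>v. x + v) ` nbrs 0"
proof (rule set_eqI)
  fix y show "y \<in> nbrs x \<longleftrightarrow> y \<in> (\<lambda>v. x + v) ` nbrs 0"
    using nbrs_iff_diff[of y x] by (auto simp: nbrs_iff_diff[of "x + _" x] intro: image_eqI[where x="y - x"])
qed

lemma nbrs_commute: "y \<in> nbrs x \<longleftrightarrow> x \<in> nbrs y"
proof -
  have "(y$i - x$i)^2 = (x$i - y$i)^2" for i by (simp add: power2_commute)
  then show ?thesis by (simp add: nbrs_def)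
qed

lemma nbrs_nth_diff_le_1: "y \<in> nbrs x \<Longrightarrow> \<bar>y$i - x$i\<bar> \<le> 1"
proof -
  assume "y \<in> nbrs x"
  moreover have "(y$i - x$i)^2 \<le> (\<Sum>j\<in>UNIV. (y$j - x$j)^2)"
    by (rule member_le_sum) auto
  ultimately have "(y$i - x$i)^2 \<le> 1" by (simp add: nbrs_def)
  then show ?thesis by (simp add: abs_square_le_1)
qed

lemma nbrs_nth_eq:
  assumes "y \<in> nbrs x" "(y$i - x$i)^2 = 1" "j \<noteq> i"
  shows "y$j = x$j"
proof -
  have "(\<Sum>m\<in>UNIV. (y$m - x$m)^2) = (y$i - x$i)^2 + (\<Sum>m\<in>UNIV - {i}. (y$m - x$m)^2)"
    by (rule sum.remove) auto
  then have "(\<Sum>m\<in>UNIV - {i}. (y$m - x$m)^2) = 0" using assms(1,2) by (simp add: nbrs_def)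
  then have "\<forall>m\<in>UNIV - {i}. (y$m - x$m)^2 = 0" by (subst sum_nonneg_eq_0_iff[symmetric]) auto
  then show ?thesis using assms(3) by auto
qed

lemma finite_nbrs: "finite (nbrs x)"
proof -
  have "nbrs (0::int^'n) \<subseteq> {v. \<forall>i. v$i \<in> {-1..1}}"
    using nbrs_nth_diff_le_1[of _ 0] by (auto simp: abs_le_iff)
  then have "finite (nbrs (0::int^'n))"
    using finite_vec_range[of "{-1..1::int}"] finite_subset by auto
  then show ?thesis unfolding nbrs_translate[of x] by (rule finite_imageI)
qed

lemma unit_vec_in_nbrs: "x + unit_vec i \<in> nbrs x"
proof -
  have "(\<Sum>j\<in>UNIV. (unit_vec i $ j)^2) = (\<Sum>j\<in>UNIV. if j = i then 1 else (0::int))"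
    by (intro sum.cong) (auto simp: unit_vec_def)
  then show ?thesis by (simp add: nbrs_def)
qed

lemma card_nbrs: "card (nbrs (x::int^'n::finite)) = card (nbrs (0::int^'n))"
  by (simp add: nbrs_translate[of x] card_image inj_on_def)

lemma lattice_degree_pos [simp]: "lattice_degree TYPE('n::finite) > 0"
  using finite_nbrs unit_vec_in_nbrs[of 0] card_gt_0_iff unfolding lattice_degree_def by fastforce

lemma lattice_degree_nonneg [simp]: "lattice_degree TYPE('n::finite) \<ge> 0"
  using lattice_degree_pos[where 'n='n] by linarith

lemma lattice_degree_neq_0 [simp]: "lattice_degree TYPE('n::finite) \<noteq> 0"
  using lattice_degree_pos[where 'n='n] by linarith

lemma lattice_degree_add_pos [simp]: "\<alpha> \<ge> 0 \<Longrightarrow> lattice_degree TYPE('n::finite) + \<alpha> > 0"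
  using lattice_degree_pos[where 'n='n] by linarith

lemma sum_nbrs_translate: "(\<Sum>y\<in>nbrs x. g y) = (\<Sum>v\<in>nbrs 0. g (x + v))"
  by (simp add: nbrs_translate[of x] sum.reindex inj_on_def)

lemma lap_eq: "lap f x = lattice_degree TYPE('n::finite) * f x - (\<Sum>y\<in>nbrs x. f y)"
  for x :: "int^'n"
  by (simp add: lap_def sum_subtractf card_nbrs[of x] lattice_degree_def)

lemma lap_diff: "lap (\<lambda>x. f x - g x) x = lap f x - lap g x"
  by (simp add: lap_def sum_subtractf[symmetric] algebra_simps)

lemma lap_nonneg_at_max: "(\<And>y. y \<in> nbrs x \<Longrightarrow> g y \<le> g x) \<Longrightarrow> lap g x \<ge> 0"
  unfolding lap_def by (intro sum_nonneg) auto

definition cube :: "nat \<Rightarrow> (int^'n::finite) set" where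
  "cube n = {x. \<forall>i. x$i \<in> {-int n..int n}}"

lemma finite_cube: "finite (cube n)"
  unfolding cube_def by (rule finite_vec_range) simp

lemma zero_in_cube: "0 \<in> cube n"
  by (simp add: cube_def)

lemma cube_mono: "m \<le> n \<Longrightarrow> cube m \<subseteq> cube n"
proof
  fix x :: "int^'n" assume "m \<le> n" "x \<in> cube m"
  then have "x$i \<in> {-int n..int n}" for i
    unfolding cube_def by (metis (mono_tags) atLeastAtMost_iff mem_Collect_eq neg_le_iff_le of_nat_mono order_trans)
  then show "x \<in> cube n" by (simp add: cube_def)
qed

lemma nbrs_cube:
  assumes "x \<in> cube n" "y \<in> nbrs x"
  shows "y \<in> cube (Suc n)"
proof -
  have "y$i \<in> {-int (Suc n)..int (Suc n)}" for i
  proof -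
    have "x$i \<in> {-int n..int n}" using assms(1) unfolding cube_def by blast
    then show ?thesis using nbrs_nth_diff_le_1[OF assms(2), of i] by auto
  qed
  then show ?thesis by (simp add: cube_def)
qed

section \<open>Random walk and the resolvent series\<close>

text \<open>By the symmetry of the neighbour relation, \<open>walk_prob n x\<close> is the probability that
  the simple random walk started at 0 is at \<open>x\<close> after \<open>n\<close> steps.\<close>

primrec walk_prob :: "nat \<Rightarrow> int^'n::finite \<Rightarrow> real" where
  "walk_prob 0 x = (if x = 0 then 1 else 0)"
| "walk_prob (Suc n) x = (\<Sum>y\<in>nbrs x. walk_prob n y) / lattice_degree TYPE('n)"

lemma walk_prob_nonneg: "walk_prob n x \<ge> 0"
  by (induction n arbitrary: x) (auto intro!: sum_nonneg divide_nonneg_pos lattice_degree_pos)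

lemma sum_walk_prob_le_1: "finite F \<Longrightarrow> (\<Sum>x\<in>F. walk_prob n (x::int^'n::finite)) \<le> 1"
proof (induction n arbitrary: F)
  case 0
  then show ?case by (simp add: sum.delta)
next
  case (Suc n)
  have "(\<Sum>x\<in>F. \<Sum>y\<in>nbrs x. walk_prob n y) = (\<Sum>x\<in>F. \<Sum>v\<in>nbrs 0. walk_prob n (x + v))"
    by (rule sum.cong[OF refl sum_nbrs_translate])
  also have "\<dots> = (\<Sum>v\<in>nbrs 0. \<Sum>x\<in>F. walk_prob n (x + v))"
    by (rule sum.swap)
  also have "\<dots> \<le> (\<Sum>v\<in>nbrs (0::int^'n). 1)"
  proof (rule sum_mono)
    fix v :: "int^'n"
    have "(\<Sum>x\<in>F. walk_prob n (x + v)) = (\<Sum>y\<in>(\<lambda>x. x + v) ` F. walk_prob n y)"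
      by (simp add: sum.reindex inj_on_def)
    also have "\<dots> \<le> 1" using Suc by auto
    finally show "(\<Sum>x\<in>F. walk_prob n (x + v)) \<le> 1" .
  qed
  finally show ?case
    by (simp add: sum_divide_distrib[symmetric] divide_le_eq lattice_degree_def)
qed

lemma walk_prob_le_1: "walk_prob n x \<le> 1"
  using sum_walk_prob_le_1[of "{x}" n] by simp

lemma walk_prob_support: "walk_prob n x \<noteq> 0 \<Longrightarrow> x \<in> cube n"
proof (induction n arbitrary: x)
  case 0 then show ?case by (simp add: zero_in_cube split: if_splits)
next
  case (Suc n)
  then obtain y where "y \<in> nbrs x" "walk_prob n y \<noteq> 0" by (auto elim: sum.not_neutral_contains_not_neutral)
  then show ?case using Suc.IH nbrs_cube nbrs_commute by blast
qed

lemma geometric_resolvent_sums: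
  fixes c \<alpha> :: real
  assumes "c > 0" "\<alpha> > 0"
  shows "(\<lambda>n. c^n / (c + \<alpha>)^Suc n) sums (1/\<alpha>)"
proof -
  have "norm (c / (c + \<alpha>)) < 1" using assms by simp
  then have "(\<lambda>n. 1 / (c + \<alpha>) * (c / (c + \<alpha>))^n) sums (1 / (c + \<alpha>) * (1 / (1 - c / (c + \<alpha>))))"
    by (intro sums_mult geometric_sums)
  moreover have "1 / (c + \<alpha>) * (1 / (1 - c / (c + \<alpha>))) = 1/\<alpha>"
    using assms by (simp add: field_simps)
  ultimately show ?thesis by (simp add: power_divide)
qed

text \<open>Writing \<open>lap = c (1 - P)\<close> with \<open>P\<close> the transition operator of the walk and
  \<open>c = lattice_degree\<close>, expanding \<open>(c + \<alpha> - c P)\<^sup>-\<^sup>1\<close> in powers of \<open>P\<close> gives these terms.\<close>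

definition resolvent_term :: "real \<Rightarrow> nat \<Rightarrow> int^'n::finite \<Rightarrow> real" where
  "resolvent_term \<alpha> n x =
     lattice_degree TYPE('n) ^ n / (lattice_degree TYPE('n) + \<alpha>) ^ Suc n * walk_prob n x"

lemma resolvent_term_nonneg: "\<alpha> \<ge> 0 \<Longrightarrow> resolvent_term \<alpha> n x \<ge> 0"
  unfolding resolvent_term_def
  by (intro mult_nonneg_nonneg divide_nonneg_pos zero_le_power zero_less_power walk_prob_nonneg) simp_all

lemma resolvent_term_le:
  "\<alpha> \<ge> 0 \<Longrightarrow> resolvent_term \<alpha> n (x::int^'n::finite)
     \<le> lattice_degree TYPE('n) ^ n / (lattice_degree TYPE('n) + \<alpha>) ^ Suc n"
  unfolding resolvent_term_def
  by (intro mult_left_le divide_nonneg_pos zero_le_power zero_less_power walk_prob_le_1) simp_all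

lemma resolvent_term_antimono: "\<alpha> \<ge> 0 \<Longrightarrow> resolvent_term \<alpha> n x \<le> resolvent_term 0 n x"
  unfolding resolvent_term_def using walk_prob_nonneg
  by (intro mult_right_mono divide_left_mono power_mono mult_pos_pos) auto

lemma resolvent_term_0:
  "resolvent_term \<alpha> 0 (x::int^'n::finite) = (if x = 0 then 1 / (lattice_degree TYPE('n) + \<alpha>) else 0)"
  by (simp add: resolvent_term_def)

lemma sum_nbrs_resolvent_term:
  assumes "\<alpha> \<ge> 0"
  shows "(\<Sum>y\<in>nbrs x. resolvent_term \<alpha> n y)
    = (lattice_degree TYPE('n::finite) + \<alpha>) * resolvent_term \<alpha> (Suc n) (x::int^'n)"
proof -
  define c where "c = lattice_degree TYPE('n)"
  define q where "q = c + \<alpha>"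
  have q: "q > 0" unfolding q_def c_def using assms by (rule lattice_degree_add_pos)
  have "(\<Sum>y\<in>nbrs x. resolvent_term \<alpha> n y) = c^n / q^Suc n * (\<Sum>y\<in>nbrs x. walk_prob n y)"
    by (simp add: resolvent_term_def c_def q_def sum_distrib_left)
  also have "(\<Sum>y\<in>nbrs x. walk_prob n y) = c * walk_prob (Suc n) x"
    by (simp add: c_def)
  also have "c^n / q^Suc n * (c * walk_prob (Suc n) x) = q * (c^Suc n / q^Suc (Suc n) * walk_prob (Suc n) x)"
    using q by (simp add: field_simps)
  finally show ?thesis by (simp add: resolvent_term_def c_def q_def)
qed

definition resolvent_trunc :: "real \<Rightarrow> nat \<Rightarrow> int^'n::finite \<Rightarrow> real" where
  "resolvent_trunc \<alpha> N x = (\<Sum>n<N. resolvent_term \<alpha> n x)"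

lemma resolvent_trunc_nonneg: "\<alpha> \<ge> 0 \<Longrightarrow> resolvent_trunc \<alpha> N x \<ge> 0"
  unfolding resolvent_trunc_def by (intro sum_nonneg resolvent_term_nonneg)

lemma resolvent_trunc_support:
  assumes "x \<notin> cube N"
  shows "resolvent_trunc \<alpha> N x = 0"
proof -
  have "walk_prob n x = 0" if "n < N" for n
    using walk_prob_support cube_mono[of n N] that assms by (meson less_imp_le subsetD)
  then show ?thesis unfolding resolvent_trunc_def resolvent_term_def by simp
qed

lemma lap_resolvent_trunc:
  assumes "\<alpha> \<ge> 0"
  shows "lap (resolvent_trunc \<alpha> N) x + \<alpha> * resolvent_trunc \<alpha> N x
    = (if x = 0 then 1 else 0) - (lattice_degree TYPE('n::finite) + \<alpha>) * resolvent_term \<alpha> N (x::int^'n)"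
proof -
  define q where "q = lattice_degree TYPE('n) + \<alpha>"
  have "(\<Sum>y\<in>nbrs x. resolvent_trunc \<alpha> N y) = (\<Sum>n<N. \<Sum>y\<in>nbrs x. resolvent_term \<alpha> n y)"
    unfolding resolvent_trunc_def by (rule sum.swap)
  also have "\<dots> = q * (\<Sum>n<N. resolvent_term \<alpha> (Suc n) x)"
    by (simp add: sum_nbrs_resolvent_term[OF assms] q_def sum_distrib_left)
  moreover have "lap (resolvent_trunc \<alpha> N) x + \<alpha> * resolvent_trunc \<alpha> N x
      = q * resolvent_trunc \<alpha> N x - (\<Sum>y\<in>nbrs x. resolvent_trunc \<alpha> N y)"
    unfolding lap_eq q_def by (simp add: algebra_simps)
  ultimately have "lap (resolvent_trunc \<alpha> N) x + \<alpha> * resolvent_trunc \<alpha> N x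
      = q * (\<Sum>n<N. resolvent_term \<alpha> n x - resolvent_term \<alpha> (Suc n) x)"
    by (simp only: resolvent_trunc_def sum_subtractf right_diff_distrib)
  also have "\<dots> = q * (resolvent_term \<alpha> 0 x - resolvent_term \<alpha> N x)"
    using sum_lessThan_telescope'[where f="\<lambda>n. resolvent_term \<alpha> n x"] by simp
  also have "\<dots> = (if x = 0 then 1 else 0) - q * resolvent_term \<alpha> N x"
    using lattice_degree_add_pos[OF assms, where 'n='n]
    by (simp add: resolvent_term_0 q_def right_diff_distrib)
  finally show ?thesis unfolding q_def .
qed

definition resolvent_series :: "real \<Rightarrow> int^'n::finite \<Rightarrow> real" where
  "resolvent_series \<alpha> x = (\<Sum>n. resolvent_term \<alpha> n x)"

lemma summable_resolvent_term:
  assumes "\<alpha> > 0"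
  shows "summable (\<lambda>n. resolvent_term \<alpha> n (x::int^'n::finite))"
proof (rule summable_comparison_test'[where N=0])
  show "summable (\<lambda>n. lattice_degree TYPE('n) ^ n / (lattice_degree TYPE('n) + \<alpha>) ^ Suc n)"
    using geometric_resolvent_sums[OF lattice_degree_pos assms] by (rule sums_summable)
  show "norm (resolvent_term \<alpha> n x) \<le> lattice_degree TYPE('n) ^ n / (lattice_degree TYPE('n) + \<alpha>) ^ Suc n"
    for n using assms resolvent_term_nonneg[of \<alpha> n x] resolvent_term_le[of \<alpha> n x] by simp
qed

lemma resolvent_trunc_le_series:
  assumes "\<alpha> \<ge> 0" "summable (\<lambda>n. resolvent_term \<alpha> n x)"
  shows "resolvent_trunc \<alpha> N x \<le> resolvent_series \<alpha> x"
  unfolding resolvent_trunc_def resolvent_series_def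
  by (rule sum_le_suminf[OF assms(2)]) (simp_all add: resolvent_term_nonneg assms(1))

lemma resolvent_series_nonneg: "\<alpha> > 0 \<Longrightarrow> resolvent_series \<alpha> x \<ge> 0"
  unfolding resolvent_series_def by (intro suminf_nonneg summable_resolvent_term resolvent_term_nonneg) simp_all

lemma lap_resolvent_series:
  fixes x :: "int^'n::finite"
  assumes "\<alpha> \<ge> 0" and summable: "\<And>x::int^'n. summable (\<lambda>n. resolvent_term \<alpha> n x)"
  shows "lap (resolvent_series \<alpha>) x + \<alpha> * resolvent_series \<alpha> x = (if x = 0 then 1 else 0)"
proof -
  have trunc: "(\<lambda>N. resolvent_trunc \<alpha> N y) \<longlonglongrightarrow> resolvent_series \<alpha> y" for y :: "int^'n"
    unfolding resolvent_trunc_def resolvent_series_def using summable by (rule summable_LIMSEQ)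
  have "(\<lambda>N. lap (resolvent_trunc \<alpha> N) x + \<alpha> * resolvent_trunc \<alpha> N x)
      \<longlonglongrightarrow> lap (resolvent_series \<alpha>) x + \<alpha> * resolvent_series \<alpha> x"
    unfolding lap_def by (intro tendsto_intros trunc)
  moreover have "(\<lambda>N. lap (resolvent_trunc \<alpha> N) x + \<alpha> * resolvent_trunc \<alpha> N x)
      \<longlonglongrightarrow> (if x = 0 then 1 else 0) - (lattice_degree TYPE('n) + \<alpha>) * 0"
    unfolding lap_resolvent_trunc[OF assms(1)]
    by (intro tendsto_intros summable_LIMSEQ_zero summable)
  ultimately have "lap (resolvent_series \<alpha>) x + \<alpha> * resolvent_series \<alpha> x
      = (if x = 0 then 1 else 0) - (lattice_degree TYPE('n) + \<alpha>) * 0"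
    by (rule LIMSEQ_unique)
  then show ?thesis by simp
qed

corollary lap_resolvent_series_pos:
  "\<alpha> > 0 \<Longrightarrow> lap (resolvent_series \<alpha>) x + \<alpha> * resolvent_series \<alpha> x = (if x = 0 then 1 else 0)"
  by (simp add: lap_resolvent_series summable_resolvent_term)

lemma sum_resolvent_series_le:
  assumes "\<alpha> > 0" "finite F"
  shows "(\<Sum>x\<in>F. resolvent_series \<alpha> (x::int^'n::finite)) \<le> 1/\<alpha>"
proof -
  define c where "c = lattice_degree TYPE('n)"
  have "(\<Sum>x\<in>F. resolvent_series \<alpha> x) = (\<Sum>n. \<Sum>x\<in>F. resolvent_term \<alpha> n x)"
    unfolding resolvent_series_def by (rule suminf_sum[symmetric]) (rule summable_resolvent_term[OF assms(1)])
  also have "\<dots> \<le> (\<Sum>n. c^n / (c + \<alpha>)^Suc n)"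
  proof (rule suminf_le)
    fix n
    have "(\<Sum>x\<in>F. resolvent_term \<alpha> n x) = c^n / (c + \<alpha>)^Suc n * (\<Sum>x\<in>F. walk_prob n x)"
      by (simp add: resolvent_term_def c_def sum_distrib_left)
    also have "\<dots> \<le> c^n / (c + \<alpha>)^Suc n"
      unfolding c_def using assms(1) sum_walk_prob_le_1[OF assms(2), of n]
      by (intro mult_left_le divide_nonneg_pos zero_le_power zero_less_power) simp_all
    finally show "(\<Sum>x\<in>F. resolvent_term \<alpha> n x) \<le> c^n / (c + \<alpha>)^Suc n" .
    show "summable (\<lambda>n. \<Sum>x\<in>F. resolvent_term \<alpha> n x)"
      by (intro summable_sum summable_resolvent_term assms(1))
    show "summable (\<lambda>n. c^n / (c + \<alpha>)^Suc n)"
      unfolding c_def using geometric_resolvent_sums[OF lattice_degree_pos assms(1)] by (rule sums_summable)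
  qed
  also have "\<dots> = 1/\<alpha>"
    unfolding c_def using geometric_resolvent_sums[OF lattice_degree_pos assms(1)] by (rule sums_unique[symmetric])
  finally show ?thesis .
qed

lemma resolvent_series_l2:
  assumes "\<alpha> > 0"
  shows "(\<lambda>x. (resolvent_series \<alpha> x)^2) summable_on (UNIV::(int^'n::finite) set)"
proof (rule nonneg_bdd_above_summable_on)
  have sq_le: "(resolvent_series \<alpha> x)^2 \<le> resolvent_series \<alpha> x / \<alpha>" for x :: "int^'n"
  proof -
    have "resolvent_series \<alpha> x \<le> 1/\<alpha>" using sum_resolvent_series_le[OF assms, of "{x}"] by simp
    then have "resolvent_series \<alpha> x * resolvent_series \<alpha> x \<le> resolvent_series \<alpha> x * (1/\<alpha>)"
      using resolvent_series_nonneg[OF assms, of x] by (intro mult_left_mono) simp_all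
    then show ?thesis by (simp add: power2_eq_square)
  qed
  show "bdd_above (sum (\<lambda>x. (resolvent_series \<alpha> x)^2) ` {F::(int^'n) set. F \<subseteq> UNIV \<and> finite F})"
  proof (rule bdd_aboveI2)
    fix F :: "(int^'n) set" assume "F \<in> {F. F \<subseteq> UNIV \<and> finite F}"
    then have F: "finite F" by simp
    have "(\<Sum>x\<in>F. (resolvent_series \<alpha> x)^2) \<le> (\<Sum>x\<in>F. resolvent_series \<alpha> x) / \<alpha>"
      using sq_le by (simp add: sum_divide_distrib sum_mono)
    also have "\<dots> \<le> 1/\<alpha> / \<alpha>"
      using assms by (intro divide_right_mono sum_resolvent_series_le F) simp_all
    finally show "(\<Sum>x\<in>F. (resolvent_series \<alpha> x)^2) \<le> 1/\<alpha> / \<alpha>" .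
  qed
qed simp

lemma finite_superlevel_if_l2:
  fixes f :: "'a \<Rightarrow> real"
  assumes l2: "(\<lambda>x. (f x)^2) summable_on UNIV" and "\<epsilon> > 0"
  shows "finite {x. f x \<ge> \<epsilon>}"
proof (rule ccontr)
  assume "infinite {x. f x \<ge> \<epsilon>}"
  define s where "s = infsum (\<lambda>x. (f x)^2) UNIV"
  define m where "m = Suc (nat \<lceil>s / \<epsilon>^2\<rceil>)"
  obtain B where B: "finite B" "card B = m" "B \<subseteq> {x. f x \<ge> \<epsilon>}"
    using infinite_arbitrarily_large[OF \<open>infinite _\<close>] by blast
  have "(\<Sum>x\<in>B. \<epsilon>^2) \<le> (\<Sum>x\<in>B. (f x)^2)"
    using B(3) \<open>\<epsilon> > 0\<close> by (intro sum_mono power_mono) auto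
  also have "\<dots> \<le> s"
    unfolding s_def by (rule finite_sum_le_infsum[OF l2 B(1)]) auto
  finally have "real m * \<epsilon>^2 \<le> s" using B(2) by simp
  moreover have "s / \<epsilon>^2 < real m" unfolding m_def by linarith
  then have "s < real m * \<epsilon>^2" using \<open>\<epsilon> > 0\<close> by (simp add: divide_less_eq)
  ultimately show False by linarith
qed

lemma max_attained_if_finite_superlevels:
  fixes g :: "'a \<Rightarrow> real"
  assumes fin: "\<And>\<epsilon>. \<epsilon> > 0 \<Longrightarrow> finite {x\<in>S. g x \<ge> \<epsilon>}" and "z \<in> S" "g z > 0"
  obtains z0 where "z0 \<in> S" "g z0 > 0" "\<And>x. x \<in> S \<Longrightarrow> g x \<le> g z0"
proof -
  define A where "A = {x\<in>S. g x \<ge> g z}"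
  have "finite A" "z \<in> A" unfolding A_def using fin[OF \<open>g z > 0\<close>] \<open>z \<in> S\<close> by auto
  then have "Max (g ` A) \<in> g ` A" by (intro Max_in) auto
  then obtain z0 where z0: "z0 \<in> A" "g z0 = Max (g ` A)" by auto
  then have z0_max: "g x \<le> g z0" if "x \<in> A" for x using that \<open>finite A\<close> by simp
  show thesis
  proof (rule that)
    show "z0 \<in> S" "g z0 > 0" using z0 \<open>z \<in> A\<close> \<open>g z > 0\<close> by (auto simp: A_def)
    show "g x \<le> g z0" if "x \<in> S" for x
      using z0_max[of x] z0_max[OF \<open>z \<in> A\<close>] that by (cases "g x \<ge> g z") (auto simp: A_def)
  qed
qed

text \<open>Square summability makes a positive maximum be attained, and there \<open>lap g \<ge> 0\<close>.\<close>

lemma l2_subsolution_nonpos: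
  fixes g :: "int^'n::finite \<Rightarrow> real"
  assumes l2: "(\<lambda>x. (g x)^2) summable_on UNIV" and "\<alpha> > 0"
    and sub: "\<And>x. g x > 0 \<Longrightarrow> lap g x + \<alpha> * g x \<le> 0"
  shows "g x \<le> 0"
proof (rule ccontr)
  assume "\<not> g x \<le> 0"
  then obtain z where z: "g z > 0" "\<And>y. g y \<le> g z"
    using max_attained_if_finite_superlevels[of UNIV g x] finite_superlevel_if_l2[OF l2] by auto
  have "lap g z \<ge> 0" using z by (intro lap_nonneg_at_max)
  then show False using sub[OF z(1)] z(1) \<open>\<alpha> > 0\<close> by (smt (verit) mult_pos_pos)
qed

lemma l2_diff:
  fixes f g :: "'a \<Rightarrow> real"
  assumes "(\<lambda>x. (f x)^2) summable_on A" "(\<lambda>x. (g x)^2) summable_on A"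
  shows "(\<lambda>x. (f x - g x)^2) summable_on A"
proof (rule summable_on_comparison_test)
  show "(\<lambda>x. 2 * (f x)^2 + 2 * (g x)^2) summable_on A"
    using assms by (intro summable_on_add summable_on_cmult_right)
  show "(f x - g x)^2 \<le> 2 * (f x)^2 + 2 * (g x)^2" for x
    using zero_le_power2[of "f x + g x"] unfolding power2_diff power2_sum by linarith
qed simp

lemma resolvent0_eq_resolvent_series:
  assumes "\<alpha> > 0"
  shows "resolvent0 \<alpha> = (resolvent_series \<alpha> :: int^'n::finite \<Rightarrow> real)"
  unfolding resolvent0_def
proof (rule the_equality)
  have l2: "(\<lambda>x. (resolvent_series \<alpha> x)^2) summable_on UNIV" by (rule resolvent_series_l2[OF assms])
  have sol: "\<forall>x. lap (resolvent_series \<alpha>) x + \<alpha> * resolvent_series \<alpha> x = (if x = (0::int^'n) then 1 else 0)"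
    using assms by (simp add: lap_resolvent_series_pos)
  show "(\<lambda>x. (resolvent_series \<alpha> x)^2) summable_on UNIV
      \<and> (\<forall>x::int^'n. lap (resolvent_series \<alpha>) x + \<alpha> * resolvent_series \<alpha> x = (if x = 0 then 1 else 0))"
    using l2 sol by blast
  fix f :: "int^'n \<Rightarrow> real"
  assume f: "(\<lambda>x. (f x)^2) summable_on UNIV
      \<and> (\<forall>x. lap f x + \<alpha> * f x = (if x = 0 then 1 else 0))"
  have diff_sol: "lap (\<lambda>x. h1 x - h2 x) x + \<alpha> * (h1 x - h2 x) = 0"
    if "\<forall>x. lap h1 x + \<alpha> * h1 x = (if x = 0 then 1 else 0)"
       "\<forall>x. lap h2 x + \<alpha> * h2 x = (if x = 0 then 1 else 0)" for h1 h2 :: "int^'n \<Rightarrow> real" and x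
    using that[rule_format, of x] by (simp add: lap_diff algebra_simps)
  have "f x - resolvent_series \<alpha> x \<le> 0" for x
    by (rule l2_subsolution_nonpos[OF l2_diff assms]) (use f l2 sol diff_sol in auto)
  moreover have "resolvent_series \<alpha> x - f x \<le> 0" for x
    by (rule l2_subsolution_nonpos[OF l2_diff assms]) (use f l2 sol diff_sol in auto)
  ultimately show "f = resolvent_series \<alpha>" by (intro ext) (smt (verit))
qed

lemma resolvent_series_le_at_0:
  fixes x :: "int^'n::finite"
  assumes "\<alpha> > 0"
  shows "resolvent_series \<alpha> x \<le> resolvent_series \<alpha> (0::int^'n::finite)"
proof (rule ccontr)
  define g where "g y = resolvent_series \<alpha> y - resolvent_series \<alpha> (0::int^'n)" for y :: "int^'n"
  assume "\<not> ?thesis"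
  then have "g x > 0" by (simp add: g_def)
  have fin: "finite {y\<in>UNIV. g y \<ge> \<epsilon>}" if "\<epsilon> > 0" for \<epsilon>
  proof (rule finite_subset)
    show "{y\<in>UNIV. g y \<ge> \<epsilon>} \<subseteq> {y. resolvent_series \<alpha> y \<ge> \<epsilon>}"
    proof
      fix y assume "y \<in> {y\<in>UNIV. g y \<ge> \<epsilon>}"
      then show "y \<in> {y. resolvent_series \<alpha> y \<ge> \<epsilon>}"
        using resolvent_series_nonneg[OF assms, of "0::int^'n"] unfolding g_def mem_Collect_eq by linarith
    qed
    show "finite {y. resolvent_series \<alpha> y \<ge> \<epsilon>}"
      by (rule finite_superlevel_if_l2[OF resolvent_series_l2[OF assms] that])
  qed
  obtain z where z: "g z > 0" "\<And>y. g y \<le> g z"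
    using max_attained_if_finite_superlevels[OF fin _ \<open>g x > 0\<close>] by auto
  then have "z \<noteq> 0" by (auto simp: g_def)
  have "lap g z \<ge> 0" using z by (intro lap_nonneg_at_max)
  moreover have "lap g z = lap (resolvent_series \<alpha>) z"
    by (simp add: g_def lap_def)
  moreover have "lap (resolvent_series \<alpha>) z + \<alpha> * resolvent_series \<alpha> z = 0"
    using lap_resolvent_series_pos[OF assms, of z] \<open>z \<noteq> 0\<close> by simp
  moreover have "resolvent_series \<alpha> z > 0"
    using z(1) resolvent_series_nonneg[OF assms, of "0::int^'n"] by (simp add: g_def)
  ultimately show False using assms by (smt (verit) mult_pos_pos)
qed

section \<open>Polya's flow on the octant\<close>

definition octant_level :: "nat \<Rightarrow> (nat \<times> nat \<times> nat) set" where
  "octant_level n = {(i, j, k). i + j + k = n}"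

lemma finite_octant_level: "finite (octant_level n)"
proof -
  have "octant_level n \<subseteq> {..n} \<times> {..n} \<times> {..n}" by (auto simp: octant_level_def)
  then show ?thesis by (rule finite_subset) auto
qed

lemma sum_octant_level_shift1:
  "(\<Sum>(i, j, k)\<in>octant_level n. real (Suc i) * h (Suc i, j, k))
    = (\<Sum>(i, j, k)\<in>octant_level (Suc n). real i * h (i, j, k))"
proof -
  have "finite {q\<in>octant_level (Suc n). fst q = 0}" using finite_octant_level by simp
  then show ?thesis
    by (rule sum.reindex_bij_witness_not_neutral[OF finite.emptyI,
          where j="\<lambda>(i, j, k). (Suc i, j, k)" and i="\<lambda>(i, j, k). (i - 1, j, k)"])
       (auto simp: octant_level_def)
qed

lemma sum_octant_level_shift2:
  "(\<Sum>(i, j, k)\<in>octant_level n. real (Suc j) * h (i, Suc j, k))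
    = (\<Sum>(i, j, k)\<in>octant_level (Suc n). real j * h (i, j, k))"
proof -
  have "finite {q\<in>octant_level (Suc n). fst (snd q) = 0}" using finite_octant_level by simp
  then show ?thesis
    by (rule sum.reindex_bij_witness_not_neutral[OF finite.emptyI,
          where j="\<lambda>(i, j, k). (i, Suc j, k)" and i="\<lambda>(i, j, k). (i, j - 1, k)"])
       (auto simp: octant_level_def)
qed

lemma sum_octant_level_shift3:
  "(\<Sum>(i, j, k)\<in>octant_level n. real (Suc k) * h (i, j, Suc k))
    = (\<Sum>(i, j, k)\<in>octant_level (Suc n). real k * h (i, j, k))"
proof -
  have "finite {q\<in>octant_level (Suc n). snd (snd q) = 0}" using finite_octant_level by simp
  then show ?thesis
    by (rule sum.reindex_bij_witness_not_neutral[OF finite.emptyI,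
          where j="\<lambda>(i, j, k). (i, j, Suc k)" and i="\<lambda>(i, j, k). (i, j, k - 1)"])
       (auto simp: octant_level_def)
qed

text \<open>Polya's unit flow from the origin of the octant: a point \<open>(i, j, k)\<close> of level \<open>n\<close> sends
  \<open>level_flow n\<close> in total, split among its three outgoing edges in the proportion
  \<open>(i + 1) : (j + 1) : (k + 1)\<close>. Since the flow is conserved, pairing it with the increments of a
  function telescopes over the levels (\<open>sum_flow_pairing\<close>). Its energy is at most
  \<open>\<Sum>n. level_flow n = 2\<close>; this finiteness is where \<open>d \<ge> 3\<close> enters.\<close>

definition level_flow :: "nat \<Rightarrow> real" where
  "level_flow n = 2 / ((real n + 1) * (real n + 2))"

definition edge_flow :: "nat \<Rightarrow> nat \<Rightarrow> real" where
  "edge_flow n m = level_flow n / (real n + 3) * real (Suc m)"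

definition flow_pairing :: "(nat \<times> nat \<times> nat \<Rightarrow> real) \<Rightarrow> nat \<Rightarrow> nat \<times> nat \<times> nat \<Rightarrow> real" where
  "flow_pairing g n = (\<lambda>(i, j, k). edge_flow n i * (g (i, j, k) - g (Suc i, j, k))
     + edge_flow n j * (g (i, j, k) - g (i, Suc j, k)) + edge_flow n k * (g (i, j, k) - g (i, j, Suc k)))"

lemma sum_edge_flow:
  "(i, j, k) \<in> octant_level n \<Longrightarrow> edge_flow n i + edge_flow n j + edge_flow n k = level_flow n"
proof -
  assume "(i, j, k) \<in> octant_level n"
  then have "real (Suc i) + real (Suc j) + real (Suc k) = real n + 3" by (simp add: octant_level_def)
  then have "edge_flow n i + edge_flow n j + edge_flow n k = level_flow n / (real n + 3) * (real n + 3)"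
    unfolding edge_flow_def by (metis distrib_left)
  then show ?thesis by simp
qed

lemma level_flow_Suc: "level_flow n / (real n + 3) * (real n + 1) = level_flow (Suc n)"
proof -
  have "level_flow n / (real n + 3) * (real n + 1)
      = ((real n + 1) * 2) / ((real n + 1) * ((real n + 2) * (real n + 3)))"
    unfolding level_flow_def by (simp add: mult.assoc mult.commute)
  also have "\<dots> = 2 / ((real n + 2) * (real n + 3))"
    by (rule mult_divide_mult_cancel_left) linarith
  finally show ?thesis unfolding level_flow_def by (simp add: add.assoc add.commute)
qed

lemma sum_flow_pairing_level:
  "(\<Sum>p\<in>octant_level n. flow_pairing g n p)
    = level_flow n * (\<Sum>p\<in>octant_level n. g p) - level_flow (Suc n) * (\<Sum>p\<in>octant_level (Suc n). g p)"
proof -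
  define K where "K = level_flow n / (real n + 3)"
  define out where "out = (\<lambda>(i, j, k). real (Suc i) * g (Suc i, j, k) + real (Suc j) * g (i, Suc j, k)
     + real (Suc k) * g (i, j, Suc k))"
  have "flow_pairing g n p = level_flow n * g p - K * out p" if "p \<in> octant_level n" for p
  proof -
    obtain i j k where p: "p = (i, j, k)" by (cases p)
    have "level_flow n = K * real (Suc i) + K * real (Suc j) + K * real (Suc k)"
      using sum_edge_flow[of i j k n] that p unfolding edge_flow_def K_def by simp
    then show ?thesis
      unfolding p flow_pairing_def out_def edge_flow_def K_def[symmetric] by (simp add: algebra_simps)
  qed
  then have "(\<Sum>p\<in>octant_level n. flow_pairing g n p)
      = level_flow n * (\<Sum>p\<in>octant_level n. g p) - K * (\<Sum>p\<in>octant_level n. out p)"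
    by (simp add: sum_subtractf sum_distrib_left)
  also have "(\<Sum>p\<in>octant_level n. out p)
      = (\<Sum>(i, j, k)\<in>octant_level n. real (Suc i) * g (Suc i, j, k))
      + (\<Sum>(i, j, k)\<in>octant_level n. real (Suc j) * g (i, Suc j, k))
      + (\<Sum>(i, j, k)\<in>octant_level n. real (Suc k) * g (i, j, Suc k))"
    unfolding out_def by (simp only: case_prod_unfold sum.distrib)
  also have "\<dots> = (\<Sum>(i, j, k)\<in>octant_level (Suc n). real i * g (i, j, k))
      + (\<Sum>(i, j, k)\<in>octant_level (Suc n). real j * g (i, j, k))
      + (\<Sum>(i, j, k)\<in>octant_level (Suc n). real k * g (i, j, k))"
    by (simp only: sum_octant_level_shift1 sum_octant_level_shift2 sum_octant_level_shift3)
  also have "\<dots> = (\<Sum>(i, j, k)\<in>octant_level (Suc n). (real i + real j + real k) * g (i, j, k))"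
    by (simp only: case_prod_unfold sum.distrib[symmetric] distrib_right)
  also have "\<dots> = (real n + 1) * (\<Sum>p\<in>octant_level (Suc n). g p)"
    by (auto simp: sum_distrib_left octant_level_def intro!: sum.cong)
  finally show ?thesis using level_flow_Suc[of n] unfolding K_def by (metis mult.assoc)
qed

lemma sum_flow_pairing:
  "(\<Sum>n<R. \<Sum>p\<in>octant_level n. flow_pairing g n p) = g (0, 0, 0) - level_flow R * (\<Sum>p\<in>octant_level R. g p)"
proof (induction R)
  case 0
  have "octant_level 0 = {(0, 0, 0)}" by (auto simp: octant_level_def)
  then show ?case by (simp add: level_flow_def)
next
  case (Suc R)
  then show ?case by (simp add: sum_flow_pairing_level)
qed

lemma level_flow_card: "level_flow n * real (card (octant_level n)) = 1"
  using sum_flow_pairing[where R=n and g="\<lambda>_. 1"] by (simp add: flow_pairing_def)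

lemma sum_level_flow_le: "(\<Sum>n<R. level_flow n) \<le> 2"
proof -
  have "(\<Sum>n<R. level_flow n) = (\<Sum>n<R. 2 / (real n + 1) - 2 / (real (Suc n) + 1))"
    by (intro sum.cong) (simp_all add: level_flow_def field_simps)
  also have "\<dots> = 2 - 2 / (real R + 1)"
    using sum_lessThan_telescope'[where f="\<lambda>n. 2 / (real n + 1)" and m=R] by simp
  finally show ?thesis by simp
qed

definition octant_grad_sq :: "(nat \<times> nat \<times> nat \<Rightarrow> real) \<Rightarrow> nat \<times> nat \<times> nat \<Rightarrow> real" where
  "octant_grad_sq g = (\<lambda>(i, j, k). (g (i, j, k) - g (Suc i, j, k))^2 + (g (i, j, k) - g (i, Suc j, k))^2
     + (g (i, j, k) - g (i, j, Suc k))^2)"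

lemma flow_pairing_le:
  assumes "p \<in> octant_level n"
  shows "flow_pairing g n p \<le> (level_flow n)^2 + octant_grad_sq g p / 4"
proof -
  obtain i j k where p: "p = (i, j, k)" by (cases p)
  have amgm: "a * d \<le> a^2 + d^2 / 4" for a d :: real
    using zero_le_power2[of "a - d / 2"] by (simp add: power2_diff power_divide algebra_simps)
  have "(edge_flow n i)^2 + (edge_flow n j)^2 + (edge_flow n k)^2
      \<le> (edge_flow n i + edge_flow n j + edge_flow n k)^2"
    by (simp add: power2_eq_square algebra_simps edge_flow_def level_flow_def)
  also have "\<dots> = (level_flow n)^2" using sum_edge_flow assms p by simp
  finally show ?thesis
    using amgm[of "edge_flow n i" "g (i, j, k) - g (Suc i, j, k)"]
      amgm[of "edge_flow n j" "g (i, j, k) - g (i, Suc j, k)"]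
      amgm[of "edge_flow n k" "g (i, j, k) - g (i, j, Suc k)"]
    unfolding p flow_pairing_def octant_grad_sq_def prod.case add_divide_distrib by linarith
qed

lemma octant_value_le_energy:
  assumes "(\<Sum>p\<in>octant_level R. g p) = 0"
  shows "g (0, 0, 0) \<le> 2 + (\<Sum>n<R. \<Sum>p\<in>octant_level n. octant_grad_sq g p) / 4"
proof -
  have "g (0, 0, 0) = (\<Sum>n<R. \<Sum>p\<in>octant_level n. flow_pairing g n p)"
    using sum_flow_pairing[where R=R and g=g] assms by simp
  also have "\<dots> \<le> (\<Sum>n<R. \<Sum>p\<in>octant_level n. (level_flow n)^2 + octant_grad_sq g p / 4)"
    by (intro sum_mono flow_pairing_le)
  also have "\<dots> = (\<Sum>n<R. level_flow n) + (\<Sum>n<R. \<Sum>p\<in>octant_level n. octant_grad_sq g p) / 4"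
  proof -
    have "(\<Sum>p\<in>octant_level n. (level_flow n)^2) = level_flow n" for n
      using level_flow_card[of n] by (simp add: power2_eq_square mult.commute)
    then show ?thesis by (simp add: sum.distrib sum_divide_distrib)
  qed
  finally show ?thesis using sum_level_flow_le[of R] by simp
qed

section \<open>Transience of the lattice in dimension at least three\<close>

definition octant_embed :: "'n \<Rightarrow> 'n \<Rightarrow> 'n \<Rightarrow> nat \<times> nat \<times> nat \<Rightarrow> int^'n::finite" where
  "octant_embed a b d = (\<lambda>(i, j, k). \<chi> t. if t = a then int i else if t = b then int j
     else if t = d then int k else 0)"

context
  fixes a b d :: "'n::finite"
  assumes distinct: "a \<noteq> b" "a \<noteq> d" "b \<noteq> d"
begin

lemma octant_embed_nth:
  "octant_embed a b d (i, j, k) $ a = int i" "octant_embed a b d (i, j, k) $ b = int j"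
  "octant_embed a b d (i, j, k) $ d = int k"
  using distinct by (simp_all add: octant_embed_def)

lemma octant_embed_Suc:
  "octant_embed a b d (Suc i, j, k) = octant_embed a b d (i, j, k) + unit_vec a"
  "octant_embed a b d (i, Suc j, k) = octant_embed a b d (i, j, k) + unit_vec b"
  "octant_embed a b d (i, j, Suc k) = octant_embed a b d (i, j, k) + unit_vec d"
  using distinct by (simp_all add: octant_embed_def unit_vec_def vec_eq_iff)

lemma octant_embed_0: "octant_embed a b d (0, 0, 0) = 0"
  by (simp add: octant_embed_def vec_eq_iff)

lemma inj_octant_embed: "inj (octant_embed a b d)"
proof (rule injI)
  fix p q assume e: "octant_embed a b d p = octant_embed a b d q"
  obtain i j k i' j' k' where "p = (i, j, k)" "q = (i', j', k')" by (cases p, cases q)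
  with arg_cong[OF e, of "\<lambda>v. (v$a, v$b, v$d)"] show "p = q" by (simp add: octant_embed_nth)
qed

lemma octant_embed_in_cube: "p \<in> octant_level n \<Longrightarrow> octant_embed a b d p \<in> cube n"
  by (auto simp: octant_embed_def cube_def octant_level_def)

lemma octant_embed_notin_cube:
  assumes "p \<in> octant_level n" "3 * N < n"
  shows "octant_embed a b d p \<notin> cube N"
proof
  assume "octant_embed a b d p \<in> cube N"
  then have c: "octant_embed a b d p $ t \<le> int N" for t unfolding cube_def by auto
  obtain i j k where p: "p = (i, j, k)" by (cases p)
  have "int i \<le> int N" "int j \<le> int N" "int k \<le> int N"
    using c[of a] c[of b] c[of d] unfolding p octant_embed_nth by simp_all
  then show False using assms unfolding p octant_level_def by simp
qed

lemma octant_grad_sq_le_lattice: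
  fixes g :: "int^'n::finite \<Rightarrow> real"
  shows "octant_grad_sq (\<lambda>p. g (octant_embed a b d p)) p
    \<le> (\<Sum>y\<in>nbrs (octant_embed a b d p). (g (octant_embed a b d p) - g y)^2)"
proof -
  obtain i j k where p: "p = (i, j, k)" by (cases p)
  define x where "x = octant_embed a b d (i, j, k)"
  have sub: "{x + unit_vec a, x + unit_vec b, x + unit_vec d} \<subseteq> nbrs x"
    using unit_vec_in_nbrs by auto
  have "unit_vec a \<noteq> unit_vec b" "unit_vec a \<noteq> unit_vec d" "unit_vec b \<noteq> unit_vec d"
    using distinct by (auto simp: unit_vec_def vec_eq_iff)
  then have "octant_grad_sq (\<lambda>p. g (octant_embed a b d p)) p
      = (\<Sum>y\<in>{x + unit_vec a, x + unit_vec b, x + unit_vec d}. (g x - g y)^2)"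
    unfolding p octant_grad_sq_def by (simp add: octant_embed_Suc x_def[symmetric] add.assoc)
  also have "\<dots> \<le> (\<Sum>y\<in>nbrs x. (g x - g y)^2)"
    by (rule sum_mono2[OF finite_nbrs sub]) simp
  finally show ?thesis unfolding p x_def .
qed

end

lemma obtain_three_distinct:
  assumes "CARD('n::finite) \<ge> 3"
  obtains a b d :: "'n::finite" where "a \<noteq> b" "a \<noteq> d" "b \<noteq> d"
proof -
  obtain T :: "'n set" where "card T = 3" "finite T"
    using obtain_subset_with_card_n[OF assms] by blast
  then obtain a b d :: 'n where "T = {a, b, d}" "a \<noteq> b" "b \<noteq> d" "a \<noteq> d"
    using card_3_iff[of T] by auto
  then show thesis using that by blast
qed

lemma value_le_energy:
  fixes g :: "int^'n::finite \<Rightarrow> real"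
  assumes "CARD('n) \<ge> 3" and supp: "\<And>x. x \<notin> cube N \<Longrightarrow> g x = 0"
  shows "g 0 \<le> 2 + (\<Sum>x\<in>cube (3 * N + 1). \<Sum>y\<in>nbrs x. (g x - g y)^2) / 4"
proof -
  obtain a b d :: 'n where distinct: "a \<noteq> b" "a \<noteq> d" "b \<noteq> d"
    using obtain_three_distinct[OF assms(1)] by blast
  define e where "e = octant_embed a b d"
  define R where "R = 3 * N + 1"
  define E where "E x = (\<Sum>y\<in>nbrs x. (g x - g y)^2)" for x
  have "g (e p) = 0" if "p \<in> octant_level R" for p
    using supp octant_embed_notin_cube[OF distinct that] unfolding e_def R_def by simp
  then have "g (e (0, 0, 0)) \<le> 2 + (\<Sum>n<R. \<Sum>p\<in>octant_level n. octant_grad_sq (\<lambda>p. g (e p)) p) / 4"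
    by (intro octant_value_le_energy sum.neutral) blast
  then have "g 0 \<le> 2 + (\<Sum>n<R. \<Sum>p\<in>octant_level n. octant_grad_sq (\<lambda>p. g (e p)) p) / 4"
    unfolding e_def octant_embed_0[OF distinct] .
  also have "(\<Sum>n<R. \<Sum>p\<in>octant_level n. octant_grad_sq (\<lambda>p. g (e p)) p)
      \<le> (\<Sum>n<R. \<Sum>p\<in>octant_level n. E (e p))"
    unfolding E_def e_def by (intro sum_mono octant_grad_sq_le_lattice[OF distinct])
  also have "\<dots> = (\<Sum>p\<in>(\<Union>n<R. octant_level n). E (e p))"
  proof (rule sum.UNION_disjoint[symmetric])
    show "\<forall>n\<in>{..<R}. finite (octant_level n)" using finite_octant_level by blast
  qed (auto simp: octant_level_def)
  also have "\<dots> = (\<Sum>x\<in>e ` (\<Union>n<R. octant_level n). E x)"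
    using inj_octant_embed[OF distinct] by (simp add: sum.reindex inj_on_subset e_def)
  also have "\<dots> \<le> (\<Sum>x\<in>cube R. E x)"
  proof (rule sum_mono2[OF finite_cube])
    show "e ` (\<Union>n<R. octant_level n) \<subseteq> cube R"
    proof (clarify)
      fix n p assume "n < R" "p \<in> octant_level n"
      then show "e p \<in> cube R"
        using octant_embed_in_cube[OF distinct] cube_mono[of n R] unfolding e_def by (cases p) auto
    qed
    show "0 \<le> E x" for x unfolding E_def by (intro sum_nonneg) simp
  qed
  finally show ?thesis by (simp add: E_def R_def divide_right_mono)
qed

lemma sum_nbrs_restrict:
  assumes "finite T" "\<And>y. y \<in> nbrs x \<Longrightarrow> y \<notin> T \<Longrightarrow> H y = 0"
  shows "(\<Sum>y\<in>nbrs x. H y) = (\<Sum>y\<in>T. if y \<in> nbrs x then H y else 0)"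
proof -
  have "(\<Sum>y\<in>nbrs x. H y) = (\<Sum>y\<in>nbrs x \<inter> T. H y)"
    by (rule sum.mono_neutral_right) (use finite_nbrs assms(2) in auto)
  also have "\<dots> = (\<Sum>y\<in>T. if y \<in> nbrs x then H y else 0)"
    using sum.inter_restrict[OF assms(1), of H "nbrs x"] by (simp add: Int_commute)
  finally show ?thesis .
qed

lemma energy_eq_lap:
  fixes f :: "int^'n::finite \<Rightarrow> real"
  assumes supp: "\<And>x. x \<notin> cube N \<Longrightarrow> f x = 0" and "N < M"
  shows "(\<Sum>x\<in>cube M. \<Sum>y\<in>nbrs x. (f x - f y)^2) = 2 * (\<Sum>x\<in>cube M. f x * lap f x)"
proof -
  define T where "T = (cube M :: (int^'n) set)"
  have "finite T" unfolding T_def by (rule finite_cube)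
  have out: "f x = 0 \<and> f y = 0" if "y \<in> nbrs x" "y \<notin> T" for x y
  proof -
    have "cube (Suc N) \<subseteq> T" "cube N \<subseteq> T" unfolding T_def using \<open>N < M\<close> by (auto intro!: cube_mono)
    then have "x \<notin> cube N" "y \<notin> cube N" using that nbrs_cube by blast+
    then show ?thesis using supp by simp
  qed
  define A where "A x y = (if y \<in> nbrs x then f x * (f x - f y) else 0)" for x y
  have lap_A: "f x * lap f x = (\<Sum>y\<in>T. A x y)" for x
  proof -
    have "f x * lap f x = (\<Sum>y\<in>nbrs x. f x * (f x - f y))" by (simp add: lap_def sum_distrib_left)
    also have "\<dots> = (\<Sum>y\<in>T. A x y)" unfolding A_def by (rule sum_nbrs_restrict[OF \<open>finite T\<close>]) (use out in auto)
    finally show ?thesis .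
  qed
  have "(\<Sum>y\<in>nbrs x. (f x - f y)^2) = (\<Sum>y\<in>T. A x y + A y x)" for x
  proof -
    have "(\<Sum>y\<in>nbrs x. (f x - f y)^2) = (\<Sum>y\<in>T. if y \<in> nbrs x then (f x - f y)^2 else 0)"
      by (rule sum_nbrs_restrict[OF \<open>finite T\<close>]) (use out in auto)
    also have "\<dots> = (\<Sum>y\<in>T. A x y + A y x)"
      unfolding A_def using nbrs_commute[of _ x] by (intro sum.cong) (auto simp: power2_eq_square algebra_simps)
    finally show ?thesis .
  qed
  then have "(\<Sum>x\<in>T. \<Sum>y\<in>nbrs x. (f x - f y)^2) = (\<Sum>x\<in>T. \<Sum>y\<in>T. A x y) + (\<Sum>x\<in>T. \<Sum>y\<in>T. A y x)"
    by (simp add: sum.distrib)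
  also have "(\<Sum>x\<in>T. \<Sum>y\<in>T. A y x) = (\<Sum>x\<in>T. \<Sum>y\<in>T. A x y)"
    by (rule sum.swap)
  finally show ?thesis unfolding T_def lap_A by simp
qed

lemma resolvent_trunc_energy_le:
  assumes "\<alpha> \<ge> 0" "N < M"
  shows "(\<Sum>x\<in>(cube M::(int^'n::finite) set). \<Sum>y\<in>nbrs x. (resolvent_trunc \<alpha> N x - resolvent_trunc \<alpha> N y)^2)
    \<le> 2 * resolvent_trunc \<alpha> N (0::int^'n)"
proof -
  define f where "f = (resolvent_trunc \<alpha> N :: int^'n \<Rightarrow> real)"
  have "f x * lap f x \<le> (if x = 0 then f x else 0)" for x
  proof -
    have "lap f x = (if x = 0 then 1 else 0)
        - (lattice_degree TYPE('n) + \<alpha>) * resolvent_term \<alpha> N x - \<alpha> * f x"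
      using lap_resolvent_trunc[OF assms(1), of N x] unfolding f_def by linarith
    then have "f x * lap f x = f x * (if x = 0 then 1 else 0)
        - f x * ((lattice_degree TYPE('n) + \<alpha>) * resolvent_term \<alpha> N x) - \<alpha> * (f x)^2"
      by (simp only: right_diff_distrib power2_eq_square mult.left_commute)
    moreover have "f x * ((lattice_degree TYPE('n) + \<alpha>) * resolvent_term \<alpha> N x) \<ge> 0"
      unfolding f_def using assms(1)
      by (intro mult_nonneg_nonneg resolvent_trunc_nonneg resolvent_term_nonneg) simp_all
    moreover have "\<alpha> * (f x)^2 \<ge> 0" using assms(1) by simp
    ultimately show ?thesis by auto
  qed
  then have "(\<Sum>x\<in>cube M. f x * lap f x) \<le> (\<Sum>x\<in>cube M. if x = 0 then f x else 0)"
    by (rule sum_mono)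
  also have "\<dots> = f 0" by (simp add: finite_cube zero_in_cube)
  moreover have "(\<Sum>x\<in>cube M. \<Sum>y\<in>nbrs x. (f x - f y)^2) = 2 * (\<Sum>x\<in>cube M. f x * lap f x)"
    unfolding f_def by (rule energy_eq_lap[OF resolvent_trunc_support assms(2)])
  ultimately show ?thesis unfolding f_def by linarith
qed

lemma resolvent_trunc_at_0_le_4:
  assumes "CARD('n::finite) \<ge> 3" "\<alpha> \<ge> 0"
  shows "resolvent_trunc \<alpha> N (0::int^'n) \<le> 4"
proof -
  have "resolvent_trunc \<alpha> N (0::int^'n) \<le> 2 + (\<Sum>x\<in>(cube (3 * N + 1)::(int^'n) set).
      \<Sum>y\<in>nbrs x. (resolvent_trunc \<alpha> N x - resolvent_trunc \<alpha> N y)^2) / 4"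
    using value_le_energy[OF assms(1), where g="resolvent_trunc \<alpha> N" and N=N] resolvent_trunc_support
    by blast
  moreover have "(\<Sum>x\<in>(cube (3 * N + 1)::(int^'n) set). \<Sum>y\<in>nbrs x. (resolvent_trunc \<alpha> N x - resolvent_trunc \<alpha> N y)^2)
      \<le> 2 * resolvent_trunc \<alpha> N (0::int^'n)"
    by (rule resolvent_trunc_energy_le[OF assms(2)]) simp
  ultimately show ?thesis by linarith
qed

lemma resolvent_series_le_4:
  assumes "CARD('n::finite) \<ge> 3" "\<alpha> > 0"
  shows "resolvent_series \<alpha> (x::int^'n) \<le> 4"
proof -
  have "resolvent_series \<alpha> (0::int^'n) \<le> 4"
    unfolding resolvent_series_def
    using resolvent_trunc_at_0_le_4[OF assms(1)] assms(2)
    by (intro suminf_le_const summable_resolvent_term) (simp_all add: resolvent_trunc_def)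
  then show ?thesis using resolvent_series_le_at_0[OF assms(2), of x] by simp
qed

lemma continuous_resolvent_term: "continuous_on {0..1} (\<lambda>\<alpha>. resolvent_term \<alpha> n (x::int^'n::finite))"
proof -
  have "lattice_degree TYPE('n) + \<alpha> \<noteq> 0" if "\<alpha> \<in> {0..1}" for \<alpha>
  proof -
    have "lattice_degree TYPE('n) + \<alpha> > 0" using that by simp
    then show ?thesis by simp
  qed
  then show ?thesis unfolding resolvent_term_def by (intro continuous_intros) auto
qed

lemma summable_resolvent_term_0:
  assumes "CARD('n::finite) \<ge> 3"
  shows "summable (\<lambda>n. resolvent_term 0 n (x::int^'n))"
proof (rule summableI_nonneg_bounded)
  show "0 \<le> resolvent_term 0 n x" for n by (simp add: resolvent_term_nonneg)
  have "resolvent_trunc 0 N x \<le> 4" for N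
  proof (rule tendsto_upperbound)
    show "((\<lambda>\<alpha>. resolvent_trunc \<alpha> N x) \<longlongrightarrow> resolvent_trunc 0 N x) (at_right 0)"
      unfolding resolvent_trunc_def using continuous_resolvent_term
      by (intro tendsto_sum continuous_on_Icc_at_rightD[where b=1]) simp_all
    show "\<forall>\<^sub>F \<alpha> in at_right 0. resolvent_trunc \<alpha> N x \<le> 4"
      using eventually_at_right_less[of "0::real"]
    proof (rule eventually_mono)
      fix \<alpha> :: real assume "\<alpha> > 0"
      then have "resolvent_trunc \<alpha> N x \<le> resolvent_series \<alpha> x"
        by (intro resolvent_trunc_le_series summable_resolvent_term) simp_all
      also have "\<dots> \<le> 4" by (rule resolvent_series_le_4[OF assms \<open>\<alpha> > 0\<close>])
      finally show "resolvent_trunc \<alpha> N x \<le> 4" .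
    qed
  qed simp
  then show "(\<Sum>n<N. resolvent_term 0 n x) \<le> 4" for N unfolding resolvent_trunc_def .
qed

lemma resolvent0_tendsto_green:
  assumes "CARD('n::finite) \<ge> 3"
  shows "((\<lambda>\<alpha>. resolvent0 \<alpha> (x::int^'n)) \<longlongrightarrow> resolvent_series 0 x) (at_right 0)"
proof -
  have "uniform_limit {0..1} (\<lambda>N \<alpha>. resolvent_trunc \<alpha> N x) (\<lambda>\<alpha>. resolvent_series \<alpha> x) sequentially"
    unfolding resolvent_trunc_def resolvent_series_def
  proof (rule Weierstrass_m_test[OF _ summable_resolvent_term_0[OF assms]])
    show "norm (resolvent_term \<alpha> n x) \<le> resolvent_term 0 n x" if "\<alpha> \<in> {0..1}" for n \<alpha>
      using that resolvent_term_nonneg[of \<alpha> n x] resolvent_term_antimono[of \<alpha> n x] by simp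
  qed
  then have "continuous_on {0..1} (\<lambda>\<alpha>. resolvent_series \<alpha> x)"
    unfolding resolvent_trunc_def using continuous_resolvent_term
    by (intro uniform_limit_theorem[where F=sequentially]) (auto intro!: always_eventually continuous_on_sum)
  then have "((\<lambda>\<alpha>. resolvent_series \<alpha> x) \<longlongrightarrow> resolvent_series 0 x) (at_right 0)"
    by (rule continuous_on_Icc_at_rightD) simp
  moreover have "\<forall>\<^sub>F \<alpha> in at_right 0. resolvent_series \<alpha> x = resolvent0 \<alpha> x"
    using eventually_at_right_less[of "0::real"]
    by (rule eventually_mono) (simp add: resolvent0_eq_resolvent_series)
  ultimately show ?thesis by (rule tendsto_cong[THEN iffD1, rotated])
qed

lemma green0_eq_resolvent_series:
  assumes "CARD('n::finite) \<ge> 3"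
  shows "green0 = (resolvent_series 0 :: int^'n \<Rightarrow> real)"
proof
  fix x :: "int^'n"
  show "green0 x = resolvent_series 0 x"
    unfolding green0_def using resolvent0_tendsto_green[OF assms] by (rule tendsto_Lim[rotated]) simp
qed

lemma lap_green0:
  assumes "CARD('n::finite) \<ge> 3"
  shows "lap green0 (x::int^'n) = (if x = 0 then 1 else 0)"
  using lap_resolvent_series[of 0 x] summable_resolvent_term_0[OF assms] green0_eq_resolvent_series[OF assms]
  by simp

section \<open>Reflection across a hyperplane\<close>

definition l1_norm :: "int^'n::finite \<Rightarrow> nat" where
  "l1_norm z = (\<Sum>i\<in>UNIV. nat \<bar>z$i\<bar>)"

text \<open>\<open>\<rho>\<close> is the mirror symmetry of the lattice across a hyperplane bounding the half-space
  \<open>H \<ni> 0\<close>; the only edges leaving \<open>H\<close> join a point to its mirror image.\<close>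

locale lattice_reflection =
  fixes \<rho> :: "int^'n::finite \<Rightarrow> int^'n" and H :: "(int^'n) set"
  assumes involution: "\<rho> (\<rho> z) = z"
    and nbrs_reflect: "nbrs (\<rho> z) = \<rho> ` nbrs z"
    and zero_in_half: "0 \<in> H"
    and reflect_notin_half: "z \<in> H \<Longrightarrow> \<rho> z \<notin> H"
    and exit_half: "z \<in> H \<Longrightarrow> w \<in> nbrs z \<Longrightarrow> w \<notin> H \<Longrightarrow> w = \<rho> z"
    and descent: "z \<in> H \<Longrightarrow> z \<noteq> 0 \<Longrightarrow> \<exists>w\<in>nbrs z. w \<in> H \<and> l1_norm w < l1_norm z"
begin

lemma lap_reflect: "lap (\<lambda>z. f (\<rho> z)) z = lap f (\<rho> z)"
proof -
  have "inj_on \<rho> A" for A by (metis involution inj_onI)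
  then show ?thesis unfolding lap_def nbrs_reflect by (simp add: sum.reindex)
qed

text \<open>The antisymmetrisation \<open>g z = f (\<rho> z) - f z\<close> of any solution of \<open>lap f + \<alpha> f = \<delta>\<^sub>0\<close> satisfies
  \<open>lap g + \<alpha> g \<le> 0\<close> on \<open>H\<close> and \<open>g (\<rho> z) = - g z\<close>, so it cannot have a positive maximum on \<open>H\<close>.\<close>

lemma resolvent_series_reflect_le:
  assumes "\<alpha> > 0" "z \<in> H"
  shows "resolvent_series \<alpha> (\<rho> z) \<le> resolvent_series \<alpha> z"
proof (rule ccontr)
  define g where "g x = resolvent_series \<alpha> (\<rho> x) - resolvent_series \<alpha> x" for x
  assume "\<not> ?thesis"
  then have "g z > 0" by (simp add: g_def)
  have fin: "finite {x\<in>H. g x \<ge> \<epsilon>}" if "\<epsilon> > 0" for \<epsilon>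
  proof (rule finite_subset)
    show "{x\<in>H. g x \<ge> \<epsilon>} \<subseteq> \<rho> -` {y. resolvent_series \<alpha> y \<ge> \<epsilon>}"
    proof
      fix x assume "x \<in> {x\<in>H. g x \<ge> \<epsilon>}"
      then have "\<epsilon> \<le> resolvent_series \<alpha> (\<rho> x)"
        using resolvent_series_nonneg[OF assms(1), of x] by (simp add: g_def)
      then show "x \<in> \<rho> -` {y. resolvent_series \<alpha> y \<ge> \<epsilon>}" by simp
    qed
    show "finite (\<rho> -` {y. resolvent_series \<alpha> y \<ge> \<epsilon>})"
      using finite_superlevel_if_l2[OF resolvent_series_l2[OF assms(1)] that]
      by (rule finite_vimageI) (metis involution injI)
  qed
  obtain z0 where z0: "z0 \<in> H" "g z0 > 0" "\<And>x. x \<in> H \<Longrightarrow> g x \<le> g z0"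
    using max_attained_if_finite_superlevels[OF fin assms(2) \<open>g z > 0\<close>] by blast
  have "g w \<le> g z0" if "w \<in> nbrs z0" for w
  proof (cases "w \<in> H")
    case False
    then have "g w = - g z0" using exit_half[OF z0(1) that] by (simp add: g_def involution)
    then show ?thesis using z0(2) by simp
  qed (use z0 in simp)
  then have "lap g z0 \<ge> 0" by (rule lap_nonneg_at_max)
  moreover have "lap g z0 + \<alpha> * g z0
      = (lap (resolvent_series \<alpha>) (\<rho> z0) + \<alpha> * resolvent_series \<alpha> (\<rho> z0))
      - (lap (resolvent_series \<alpha>) z0 + \<alpha> * resolvent_series \<alpha> z0)"
    unfolding g_def lap_diff lap_reflect by (simp add: algebra_simps)
  moreover have "\<dots> \<le> 0"
    using reflect_notin_half[OF z0(1)] zero_in_half by (auto simp: lap_resolvent_series_pos[OF assms(1)])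
  ultimately show False using z0(2) assms(1) by (smt (verit) mult_pos_pos)
qed

lemma green0_reflect_le:
  assumes "CARD('n) \<ge> 3" "z \<in> H"
  shows "green0 (\<rho> z) \<le> green0 z"
proof -
  have "resolvent_series 0 (\<rho> z) \<le> resolvent_series 0 z"
  proof (rule tendsto_le[OF _ resolvent0_tendsto_green[OF assms(1), of z]
        resolvent0_tendsto_green[OF assms(1), of "\<rho> z"]])
    show "\<forall>\<^sub>F \<alpha> in at_right 0. resolvent0 \<alpha> (\<rho> z) \<le> resolvent0 \<alpha> z"
      using eventually_at_right_less[of "0::real"]
      by (rule eventually_mono) (simp add: resolvent0_eq_resolvent_series resolvent_series_reflect_le assms(2))
  qed simp
  then show ?thesis by (simp add: green0_eq_resolvent_series[OF assms(1)])
qed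

text \<open>Strictness propagates outwards from the origin: if \<open>D = green0 - green0 \<circ> \<rho>\<close> vanished at
  \<open>z \<in> H\<close>, then \<open>lap D z = -(\<Sum>w\<in>nbrs z. D w) \<le> 0\<close>, forcing \<open>z \<noteq> 0\<close> and \<open>D = 0\<close> at all neighbours of
  \<open>z\<close>, in particular at one closer to the origin.\<close>

lemma green0_reflect_less:
  assumes "CARD('n) \<ge> 3"
  shows "z \<in> H \<Longrightarrow> green0 (\<rho> z) < green0 z"
proof (induction "l1_norm z" arbitrary: z rule: less_induct)
  case less
  define D where "D x = green0 x - green0 (\<rho> x)" for x
  show ?case
  proof (rule ccontr)
    assume "\<not> ?case"
    then have "D z = 0" using green0_reflect_le[OF assms less.prems] by (simp add: D_def)
    have D_nonneg: "D w \<ge> 0" if "w \<in> nbrs z" for w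
    proof (cases "w \<in> H")
      case True then show ?thesis using green0_reflect_le[OF assms] by (simp add: D_def)
    next
      case False
      then have "w = \<rho> z" using exit_half[OF less.prems that] by simp
      then show ?thesis using \<open>D z = 0\<close> by (simp add: D_def involution)
    qed
    have "lap D z = - (\<Sum>w\<in>nbrs z. D w)" using \<open>D z = 0\<close> by (simp add: lap_def sum_negf)
    moreover have "lap D z = (if z = 0 then 1 else 0)"
      using lap_green0[OF assms] reflect_notin_half[OF less.prems] zero_in_half
      unfolding D_def lap_diff lap_reflect by auto
    moreover have "(\<Sum>w\<in>nbrs z. D w) \<ge> 0" using D_nonneg by (intro sum_nonneg) auto
    ultimately have "z \<noteq> 0" "(\<Sum>w\<in>nbrs z. D w) = 0" by (auto split: if_splits)
    then obtain w where w: "w \<in> nbrs z" "w \<in> H" "l1_norm w < l1_norm z" "D w = 0"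
      using descent[OF less.prems] D_nonneg finite_nbrs sum_nonneg_eq_0_iff by metis
    then show False using less.hyps[OF w(3) w(2)] by (simp add: D_def)
  qed
qed

end

definition coord_reflect :: "'n \<Rightarrow> int \<Rightarrow> int^'n::finite \<Rightarrow> int^'n" where
  "coord_reflect i c z = (\<chi> j. if j = i then c - z$i else z$j)"

lemma coord_reflect_involution: "coord_reflect i c (coord_reflect i c z) = z"
  by (simp add: coord_reflect_def vec_eq_iff)

lemma nbrs_coord_reflect: "nbrs (coord_reflect i c z) = coord_reflect i c ` nbrs z"
proof -
  have "(\<Sum>j\<in>UNIV. (y$j - coord_reflect i c z $ j)^2) = (\<Sum>j\<in>UNIV. (coord_reflect i c y $ j - z$j)^2)" for y
    by (intro sum.cong) (auto simp: coord_reflect_def power2_commute algebra_simps)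
  then have "y \<in> nbrs (coord_reflect i c z) \<longleftrightarrow> coord_reflect i c y \<in> nbrs z" for y
    by (simp add: nbrs_def)
  then show ?thesis using coord_reflect_involution by (metis (no_types) image_iff subsetI subset_antisym)
qed

lemma coord_reflect_in_nbrs:
  assumes "c = 2 * z$i + 1 \<or> c = 2 * z$i - 1"
  shows "coord_reflect i c z \<in> nbrs z"
proof -
  have "(\<Sum>j\<in>UNIV. (coord_reflect i c z $ j - z$j)^2) = (\<Sum>j\<in>UNIV. if j = i then 1 else 0)"
    using assms by (intro sum.cong) (auto simp: coord_reflect_def)
  then show ?thesis by (simp add: nbrs_def)
qed

lemma obtain_nbr_towards_0:
  fixes z :: "int^'n::finite"
  assumes "z \<noteq> 0"
  obtains j w where "z$j \<noteq> 0" "w$j = z$j - sgn (z$j)" "\<And>m. m \<noteq> j \<Longrightarrow> w$m = z$m"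
    "w \<in> nbrs z" "l1_norm w < l1_norm z"
proof -
  obtain j where j: "z$j \<noteq> 0" using assms by (auto simp: vec_eq_iff)
  define w where "w = (\<chi> m. if m = j then z$m - sgn (z$m) else z$m)"
  have wj: "w$j = z$j - sgn (z$j)" and wm: "\<And>m. m \<noteq> j \<Longrightarrow> w$m = z$m" by (simp_all add: w_def)
  have "(\<Sum>m\<in>UNIV. (w$m - z$m)^2) = (\<Sum>m\<in>UNIV. if m = j then 1 else 0)"
    using j by (intro sum.cong) (auto simp: w_def sgn_if)
  then have "w \<in> nbrs z" by (simp add: nbrs_def)
  moreover have "l1_norm w < l1_norm z"
    unfolding l1_norm_def
  proof (rule sum_strict_mono_ex1)
    show "\<forall>m\<in>UNIV. nat \<bar>w$m\<bar> \<le> nat \<bar>z$m\<bar>"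
    proof
      fix m show "nat \<bar>w$m\<bar> \<le> nat \<bar>z$m\<bar>"
        using wj wm[of m] by (cases "m = j") (auto simp: sgn_if)
    qed
    show "\<exists>m\<in>UNIV. nat \<bar>w$m\<bar> < nat \<bar>z$m\<bar>"
      using wj j by (auto simp: sgn_if)
  qed simp
  ultimately show thesis using that j wj wm by blast
qed

lemma lattice_reflection_coord:
  assumes s: "s = 1 \<or> s = -1" and "k \<ge> 0"
  shows "lattice_reflection (coord_reflect i (s * (2 * k + 1))) {z. s * z$i \<le> k}"
proof
  let ?\<rho> = "coord_reflect i (s * (2 * k + 1))"
  have ss: "s * s = 1" using s by auto
  have \<rho>_i: "s * ?\<rho> z $ i = 2 * k + 1 - s * z$i" for z
    using ss by (simp add: coord_reflect_def right_diff_distrib mult.assoc[symmetric])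
  show "?\<rho> (?\<rho> z) = z" for z by (rule coord_reflect_involution)
  show "nbrs (?\<rho> z) = ?\<rho> ` nbrs z" for z by (rule nbrs_coord_reflect)
  show "0 \<in> {z. s * z$i \<le> k}" using \<open>k \<ge> 0\<close> by simp
  show "?\<rho> z \<notin> {z. s * z$i \<le> k}" if "z \<in> {z. s * z$i \<le> k}" for z
    using that \<rho>_i[of z] by simp
  show "w = ?\<rho> z" if "z \<in> {z. s * z$i \<le> k}" "w \<in> nbrs z" "w \<notin> {z. s * z$i \<le> k}" for z w
  proof -
    have step: "w$i = z$i + s \<and> s * z$i = k"
      using s that nbrs_nth_diff_le_1[OF that(2), of i] by auto
    then have "(w$i - z$i)^2 = 1" using s by auto
    then have "w$j = z$j" if "j \<noteq> i" for j using nbrs_nth_eq[OF \<open>w \<in> nbrs z\<close>] that by blast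
    moreover have "w$i = ?\<rho> z $ i" using step s by (auto simp: coord_reflect_def)
    ultimately show ?thesis by (auto simp: vec_eq_iff coord_reflect_def)
  qed
  show "\<exists>w\<in>nbrs z. w \<in> {z. s * z$i \<le> k} \<and> l1_norm w < l1_norm z"
    if "z \<in> {z. s * z$i \<le> k}" "z \<noteq> 0" for z
  proof -
    obtain j w where w: "z$j \<noteq> 0" "w$j = z$j - sgn (z$j)" "\<And>m. m \<noteq> j \<Longrightarrow> w$m = z$m"
      "w \<in> nbrs z" "l1_norm w < l1_norm z"
      using obtain_nbr_towards_0[OF \<open>z \<noteq> 0\<close>] by blast
    have "s * w$i \<le> k"
      using that s \<open>k \<ge> 0\<close> w(1-3) by (cases "j = i") (auto simp: sgn_if)
    then show ?thesis using w(4,5) by blast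
  qed
qed

theorem mainTheorem17:
  fixes x :: "int^'n"
  assumes "CARD('n) \<ge> 3"
  shows "(\<Sum>y\<in>nbrs x. \<bar>green0 x - green0 y\<bar>) > 0"
proof -
  fix i :: 'n
  define s where "s = (if x$i \<ge> 0 then 1 else -1 :: int)"
  define k where "k = s * x$i"
  define \<rho> where "\<rho> = coord_reflect i (s * (2 * k + 1))"
  have s: "s = 1 \<or> s = -1" and "k \<ge> 0" by (simp_all add: s_def k_def)
  interpret lattice_reflection \<rho> "{z. s * z$i \<le> k}"
    unfolding \<rho>_def using s \<open>k \<ge> 0\<close> by (rule lattice_reflection_coord)
  have nbr: "\<rho> x \<in> nbrs x"
    unfolding \<rho>_def using s by (intro coord_reflect_in_nbrs) (auto simp: k_def)
  have "green0 (\<rho> x) < green0 x"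
    by (rule green0_reflect_less[OF assms]) (simp add: k_def)
  then have "0 < \<bar>green0 x - green0 (\<rho> x)\<bar>" by simp
  also have "\<dots> \<le> (\<Sum>y\<in>nbrs x. \<bar>green0 x - green0 y\<bar>)"
    by (rule member_le_sum[OF nbr _ finite_nbrs]) simp
  finally show ?thesis .
qed

end
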